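(* Let $P_n$ be the path on $n$ vertices. (1) If $n$ is even, then $\mathcal{Z}^{\mathrm{TE}}_-(P_n)=\mathcal{Z}^{\mathrm{TS}}_-(P_n)\cong K_1$. (2) If $n$ is odd, then $\mathcal{Z}^{\mathrm{TE}}_-(P_n)\cong K_{(n+1)/2}$ and $\mathcal{Z}^{\mathrm{TS}}_-(P_n)\cong \frac{n+1}{2}K_1$ (the edgeless graph on $(n+1)/2$ vertices).
   Context: Skew forcing: vertices are colored blue or white; if any vertex $u$ (blue or white) has exactly one white neighbor $v$, then $u$ may force $v$ to become blue. A skew forcing set is a (possibly empty) set of initially blue vertices from which repeated application of this rule turns every vertex blue; $\mathrm{Z}_-(G)$ is the minimum size of a skew forcing set. $\mathcal{Z}^{\mathrm{TE}}_-(G)$ has as vertices the minimum skew forcing sets of $G$, with $S_1S_2$ an edge iff $S_1\setminus S_2=\{v_1\}$ and $S_2\setminus S_1=\{v_2\}$ for some vertices $v_1,v_2$; $\mathcal{Z}^{\mathrm{TS}}_-(G)$ has the same vertices with the additional requirement $v_1v_2\in E(G)$. *)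

theory Defs
  imports Main
begin

text \<open>Simple graphs are given by a vertex set V and a symmetric irreflexive
adjacency relation E (only its restriction to V matters).\<close>

definition skew_force_step :: "'a set \<Rightarrow> ('a \<Rightarrow> 'a \<Rightarrow> bool) \<Rightarrow> 'a set \<Rightarrow> 'a set \<Rightarrow> bool" where
  "skew_force_step V E B B' \<longleftrightarrow>
     (\<exists>u\<in>V. \<exists>v. {w\<in>V. E u w \<and> w \<notin> B} = {v} \<and> B' = insert v B)"

definition skew_forcing_set :: "'a set \<Rightarrow> ('a \<Rightarrow> 'a \<Rightarrow> bool) \<Rightarrow> 'a set \<Rightarrow> bool" where
  "skew_forcing_set V E S \<longleftrightarrow> S \<subseteq> V \<and> (skew_force_step V E)\<^sup>*\<^sup>* S V"

definition skew_Z :: "'a set \<Rightarrow> ('a \<Rightarrow> 'a \<Rightarrow> bool) \<Rightarrow> nat" where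
  "skew_Z V E = (LEAST k. \<exists>S. skew_forcing_set V E S \<and> card S = k)"

definition min_skew_forcing_sets :: "'a set \<Rightarrow> ('a \<Rightarrow> 'a \<Rightarrow> bool) \<Rightarrow> 'a set set" where
  "min_skew_forcing_sets V E = {S. skew_forcing_set V E S \<and> card S = skew_Z V E}"

definition TE_adj :: "'a set \<Rightarrow> 'a set \<Rightarrow> bool" where
  "TE_adj S1 S2 \<longleftrightarrow> (\<exists>v1 v2. S1 - S2 = {v1} \<and> S2 - S1 = {v2})"

definition TS_adj :: "('a \<Rightarrow> 'a \<Rightarrow> bool) \<Rightarrow> 'a set \<Rightarrow> 'a set \<Rightarrow> bool" where
  "TS_adj E S1 S2 \<longleftrightarrow> (\<exists>v1 v2. S1 - S2 = {v1} \<and> S2 - S1 = {v2} \<and> E v1 v2)"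

definition graph_iso :: "'a set \<Rightarrow> ('a \<Rightarrow> 'a \<Rightarrow> bool) \<Rightarrow> 'b set \<Rightarrow> ('b \<Rightarrow> 'b \<Rightarrow> bool) \<Rightarrow> bool" where
  "graph_iso V1 E1 V2 E2 \<longleftrightarrow>
     (\<exists>f. bij_betw f V1 V2 \<and> (\<forall>x\<in>V1. \<forall>y\<in>V1. E1 x y \<longleftrightarrow> E2 (f x) (f y)))"

definition complete_adj :: "nat \<Rightarrow> nat \<Rightarrow> bool" where
  "complete_adj x y \<longleftrightarrow> x \<noteq> y"

definition empty_adj :: "nat \<Rightarrow> nat \<Rightarrow> bool" where
  "empty_adj x y \<longleftrightarrow> False"

definition path_adj :: "nat \<Rightarrow> nat \<Rightarrow> bool" where
  "path_adj i j \<longleftrightarrow> i = Suc j \<or> j = Suc i"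

end

(*
  Number the vertices of P_n as 0, ..., n - 1. Sweeping from the left end (0 forces 1, 2 forces 3,
  ...) turns every odd vertex blue without any initial token. Once an even vertex is blue as well,
  it has a blue neighbour, and two adjacent blue vertices spread to the whole path. For even n
  the last vertex n - 1 supplies that even vertex, so the empty set is skew forcing. For odd n
  every singleton of an even vertex is skew forcing, but no set of odd vertices is: every odd
  vertex has two even neighbours, so while only odd vertices are blue, no vertex has exactly one
  white even neighbour. So the minimum skew forcing sets are the singletons of even vertices. Two
  distinct singletons always differ by one token exchange but never by a slide, because no two
  even vertices are adjacent.
*)
theory Submission
  imports Defs
begin

lemma skew_force_reach_insert:
  assumes "u \<in> V" "v \<in> V" "E u v" "\<forall>w\<in>V. E u w \<longrightarrow> w \<noteq> v \<longrightarrow> w \<in> B"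
  shows "(skew_force_step V E)\<^sup>*\<^sup>* B (insert v B)"
proof (cases "v \<in> B")
  case False
  with assms have "{w\<in>V. E u w \<and> w \<notin> B} = {v}" by blast
  with \<open>u \<in> V\<close> have "skew_force_step V E B (insert v B)"
    unfolding skew_force_step_def by blast
  then show ?thesis by (rule r_into_rtranclp)
qed (simp add: insert_absorb)

lemma skew_Z_eqI:
  assumes "skew_forcing_set V E S" "card S = k"
    and "\<And>T. skew_forcing_set V E T \<Longrightarrow> k \<le> card T"
  shows "skew_Z V E = k"
  unfolding skew_Z_def using assms by (intro Least_equality) auto

lemma TE_adj_irrefl: "\<not> TE_adj S S"
  by (simp add: TE_adj_def)

lemma TS_adj_irrefl: "\<not> TS_adj E S S"
  by (simp add: TS_adj_def)

lemma TE_adj_singleton: "TE_adj {a} {b} \<longleftrightarrow> a \<noteq> b"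
  by (auto simp: TE_adj_def)

lemma TS_adj_singleton: "TS_adj E {a} {b} \<longleftrightarrow> a \<noteq> b \<and> E a b"
  by (cases "a = b") (auto simp: TS_adj_def)

lemma graph_iso_complete_adjI:
  assumes "finite V" "\<forall>x\<in>V. \<forall>y\<in>V. E x y \<longleftrightarrow> x \<noteq> y"
  shows "graph_iso V E {0..<card V} complete_adj"
proof -
  obtain f where f: "bij_betw f V {0..<card V}"
    using ex_bij_betw_finite_nat[OF assms(1)] by blast
  then have "\<forall>x\<in>V. \<forall>y\<in>V. x \<noteq> y \<longleftrightarrow> f x \<noteq> f y"
    by (metis bij_betw_inv_into_left)
  with f assms(2) show ?thesis
    unfolding graph_iso_def complete_adj_def by auto
qed

lemma graph_iso_empty_adjI:
  assumes "finite V" "\<forall>x\<in>V. \<forall>y\<in>V. \<not> E x y"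
  shows "graph_iso V E {0..<card V} empty_adj"
  using ex_bij_betw_finite_nat[OF assms(1)] assms(2)
  unfolding graph_iso_def empty_adj_def by auto

lemma card_even_below: "card {v::nat. v < n \<and> even v} = (n + 1) div 2"
proof (induction n)
  case (Suc n)
  have "{v. v < Suc n \<and> even v} =
        (if even n then insert n {v. v < n \<and> even v} else {v. v < n \<and> even v})"
    using less_Suc_eq by auto
  with Suc.IH show ?case by auto
qed simp

abbreviation path_force :: "nat \<Rightarrow> nat set \<Rightarrow> nat set \<Rightarrow> bool" where
  "path_force n \<equiv> skew_force_step {0..<n} path_adj"

lemma path_force_odd_sweep: "(path_force n)\<^sup>*\<^sup>* B (B \<union> {i. odd i \<and> i < n})"
proof -
  have "m \<le> n \<Longrightarrow> (path_force n)\<^sup>*\<^sup>* B (B \<union> {i. odd i \<and> i < m})" for m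
  proof (induction m)
    case (Suc m)
    let ?B = "B \<union> {i. odd i \<and> i < m}"
    have sweep: "(path_force n)\<^sup>*\<^sup>* B ?B"
      using Suc by simp
    show ?case
    proof (cases "odd m")
      case True
      then obtain k where "m = Suc k"
        using odd_pos gr0_implies_Suc by blast
      then have "(path_force n)\<^sup>*\<^sup>* ?B (insert m ?B)"
        by (intro skew_force_reach_insert[of k])
          (use Suc.prems True in \<open>auto simp: path_adj_def\<close>)
      moreover have "insert m ?B = B \<union> {i. odd i \<and> i < Suc m}"
        using True by (auto simp: less_Suc_eq)
      ultimately show ?thesis
        using sweep by (metis rtranclp_trans)
    next
      case False
      then have "?B = B \<union> {i. odd i \<and> i < Suc m}"
        by (auto simp: less_Suc_eq)
      with sweep show ?thesis by simp
    qed
  qed simp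
  then show ?thesis by simp
qed

lemma path_force_fill_right:
  assumes "i \<in> B" "Suc i \<in> B" "Suc i < n"
  shows "(path_force n)\<^sup>*\<^sup>* B (B \<union> {i..<n})"
proof -
  have "Suc (Suc i) \<le> m \<Longrightarrow> m \<le> n \<Longrightarrow> (path_force n)\<^sup>*\<^sup>* B (B \<union> {i..<m})" for m
  proof (induction m rule: dec_induct)
    case base
    with assms show ?case by (simp add: insert_absorb atLeastLessThanSuc)
  next
    case (step m)
    have "(path_force n)\<^sup>*\<^sup>* (B \<union> {i..<m}) (insert m (B \<union> {i..<m}))"
      by (rule skew_force_reach_insert[of "m - 1"]) (use step in \<open>auto simp: path_adj_def\<close>)
    with step show ?case by (simp add: atLeastLessThanSuc rtranclp_trans)
  qed
  with assms show ?thesis by simp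
qed

lemma path_force_fill_left:
  "j < n \<Longrightarrow> (path_force n)\<^sup>*\<^sup>* ({j..<n} \<union> B) ({0..<n} \<union> B)"
proof (induction j)
  case (Suc j)
  have "(path_force n)\<^sup>*\<^sup>* ({Suc j..<n} \<union> B) (insert j ({Suc j..<n} \<union> B))"
    by (rule skew_force_reach_insert[of "Suc j"]) (use Suc.prems in \<open>auto simp: path_adj_def\<close>)
  moreover have "insert j ({Suc j..<n} \<union> B) = {j..<n} \<union> B"
    using Suc.prems by auto
  ultimately show ?case
    using Suc by (metis Suc_lessD rtranclp_trans)
qed simp

lemma path_force_fill:
  assumes "i \<in> B" "Suc i \<in> B" "Suc i < n" "B \<subseteq> {0..<n}"
  shows "(path_force n)\<^sup>*\<^sup>* B {0..<n}"
proof -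
  have "(path_force n)\<^sup>*\<^sup>* B ({i..<n} \<union> B)"
    using path_force_fill_right[OF assms(1-3)] by (simp add: Un_commute)
  also have "(path_force n)\<^sup>*\<^sup>* ({i..<n} \<union> B) ({0..<n} \<union> B)"
    using assms(3) by (intro path_force_fill_left) simp
  finally show ?thesis
    using assms(4) by (simp add: Un_absorb2)
qed

lemma path_force_fill_from_even:
  assumes "even v" "v < n" "v \<in> B" "{i. odd i \<and> i < n} \<subseteq> B" "B \<subseteq> {0..<n}"
  shows "(path_force n)\<^sup>*\<^sup>* B {0..<n}"
proof -
  consider "Suc v < n" | "v = 0" "n = 1" | "v \<noteq> 0" "Suc v = n"
    using assms(2) by linarith
  then show ?thesis
  proof cases
    case 1
    with assms show ?thesis by (intro path_force_fill[of v]) auto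
  next
    case 2
    with assms have "B = {0..<n}" by auto
    then show ?thesis by simp
  next
    case 3
    with assms show ?thesis by (intro path_force_fill[of "v - 1"]) auto
  qed
qed

lemma path_even_empty_forcing:
  assumes "even n"
  shows "skew_forcing_set {0..<n} path_adj {}"
proof (cases "n = 0")
  case False
  let ?O = "{i. odd i \<and> i < n}"
  have "(path_force n)\<^sup>*\<^sup>* {} ?O"
    using path_force_odd_sweep[of n "{}"] by simp
  also have "(path_force n)\<^sup>*\<^sup>* ?O (insert (n - 2) ?O)"
    by (rule skew_force_reach_insert[of "n - 1"]) (use assms False in \<open>auto simp: path_adj_def\<close>)
  also have "(path_force n)\<^sup>*\<^sup>* (insert (n - 2) ?O) {0..<n}"
    by (rule path_force_fill_from_even[of "n - 2"]) (use assms False in auto)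
  finally show ?thesis
    unfolding skew_forcing_set_def by simp
qed (simp add: skew_forcing_set_def)

lemma path_even_singleton_forcing:
  assumes "even v" "v < n"
  shows "skew_forcing_set {0..<n} path_adj {v}"
proof -
  have "(path_force n)\<^sup>*\<^sup>* {v} ({v} \<union> {i. odd i \<and> i < n})"
    by (rule path_force_odd_sweep)
  also have "(path_force n)\<^sup>*\<^sup>* ({v} \<union> {i. odd i \<and> i < n}) {0..<n}"
    by (rule path_force_fill_from_even[of v]) (use assms in auto)
  finally show ?thesis
    unfolding skew_forcing_set_def using assms by simp
qed

lemma path_force_odd_invariant:
  assumes "(path_force n)\<^sup>*\<^sup>* B C" "odd n" "\<forall>x\<in>B. odd x"
  shows "\<forall>x\<in>C. odd x"
  using assms(1)
proof (induction rule: rtranclp_induct)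
  case (step C D)
  then obtain u v where u: "u < n" and white: "{w\<in>{0..<n}. path_adj u w \<and> w \<notin> C} = {v}"
    and D: "D = insert v C"
    unfolding skew_force_step_def by auto
  have "odd v"
  proof (rule ccontr)
    assume "\<not> odd v"
    have "path_adj u v"
      using white by blast
    with \<open>\<not> odd v\<close> obtain k where k: "u = Suc k" "even k"
      by (auto simp: path_adj_def elim!: oddE)
    with u \<open>odd n\<close> have "Suc u < n"
      by (metis Suc_lessI even_Suc)
    with k step.IH have "k \<in> {v}" "Suc u \<in> {v}"
      unfolding white[symmetric] by (auto simp: path_adj_def)
    then show False
      using k by simp
  qed
  with step.IH D show ?case by simp
qed (use assms in simp)

lemma path_odd_not_forcing:
  assumes "odd n" "\<forall>x\<in>S. odd x"
  shows "\<not> skew_forcing_set {0..<n} path_adj S"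
proof
  assume "skew_forcing_set {0..<n} path_adj S"
  then have "\<forall>x\<in>{0..<n}. odd x"
    using path_force_odd_invariant assms unfolding skew_forcing_set_def by blast
  moreover have "0 \<in> {0..<n}" using \<open>odd n\<close> by (simp add: odd_pos)
  ultimately show False by fastforce
qed

lemma min_skew_forcing_sets_path_even:
  assumes "even n"
  shows "min_skew_forcing_sets {0..<n} path_adj = {{}}"
proof -
  have "skew_Z {0..<n} path_adj = 0"
    using path_even_empty_forcing[OF assms] by (intro skew_Z_eqI) auto
  then show ?thesis
    using path_even_empty_forcing[OF assms]
    by (auto simp: min_skew_forcing_sets_def skew_forcing_set_def finite_subset)
qed

lemma min_skew_forcing_sets_path_odd:
  assumes "odd n"
  shows "min_skew_forcing_sets {0..<n} path_adj = {{v} | v. v < n \<and> even v}"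
proof -
  have singleton_forcing: "skew_forcing_set {0..<n} path_adj {v} \<longleftrightarrow> v < n \<and> even v" for v
    using path_even_singleton_forcing path_odd_not_forcing[OF assms, of "{v}"]
    by (auto simp: skew_forcing_set_def)
  have "skew_Z {0..<n} path_adj = 1"
  proof (rule skew_Z_eqI)
    show "skew_forcing_set {0..<n} path_adj {0}"
      using singleton_forcing \<open>odd n\<close> by presburger
    show "1 \<le> card T" if "skew_forcing_set {0..<n} path_adj T" for T
    proof -
      have "T \<noteq> {}"
        using that path_odd_not_forcing[OF assms, of "{}"] by auto
      moreover have "finite T"
        using that finite_subset unfolding skew_forcing_set_def by blast
      ultimately show ?thesis
        by (simp add: Suc_le_eq card_gt_0_iff)
    qed
  qed simp
  then show ?thesis
    unfolding min_skew_forcing_sets_def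
    by (auto simp: card_1_singleton_iff singleton_forcing)
qed

theorem theorem5p7:
  fixes n :: nat
  defines "M \<equiv> min_skew_forcing_sets {0..<n} path_adj"
  shows "(even n \<longrightarrow>
           (\<forall>S1\<in>M. \<forall>S2\<in>M. TE_adj S1 S2 \<longleftrightarrow> TS_adj path_adj S1 S2) \<and>
           graph_iso M TE_adj {0..<1} complete_adj \<and>
           graph_iso M (TS_adj path_adj) {0..<1} complete_adj) \<and>
         (odd n \<longrightarrow>
           graph_iso M TE_adj {0..<(n+1) div 2} complete_adj \<and>
           graph_iso M (TS_adj path_adj) {0..<(n+1) div 2} empty_adj)"
proof (intro conjI impI)
  assume "even n"
  then have M: "M = {{}}"
    by (simp add: M_def min_skew_forcing_sets_path_even)
  show "\<forall>S1\<in>M. \<forall>S2\<in>M. TE_adj S1 S2 \<longleftrightarrow> TS_adj path_adj S1 S2"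
    by (simp add: M TE_adj_irrefl TS_adj_irrefl)
  show "graph_iso M TE_adj {0..<1} complete_adj"
    using graph_iso_complete_adjI[of M TE_adj] by (simp add: M TE_adj_irrefl)
  show "graph_iso M (TS_adj path_adj) {0..<1} complete_adj"
    using graph_iso_complete_adjI[of M "TS_adj path_adj"] by (simp add: M TS_adj_irrefl)
next
  assume "odd n"
  then have M: "M = (\<lambda>v. {v}) ` {v. v < n \<and> even v}"
    by (simp add: M_def min_skew_forcing_sets_path_odd setcompr_eq_image)
  have "finite M" and card_M: "card M = (n + 1) div 2"
    by (simp_all add: M card_image card_even_below)
  show "graph_iso M TE_adj {0..<(n+1) div 2} complete_adj"
    using graph_iso_complete_adjI[OF \<open>finite M\<close>, of TE_adj] unfolding card_M
    by (simp add: M TE_adj_singleton)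
  have "\<forall>S1\<in>M. \<forall>S2\<in>M. \<not> TS_adj path_adj S1 S2"
    by (auto simp: M TS_adj_singleton path_adj_def)
  then show "graph_iso M (TS_adj path_adj) {0..<(n+1) div 2} empty_adj"
    using graph_iso_empty_adjI[OF \<open>finite M\<close>] unfolding card_M by blast
qed

end
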